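(* There exist $2^{\mathfrak{c}}$ pairwise non-homeomorphic topologies $\vartheta\in\mathcal{L}_0\setminus\{\eta\}$ such that no topology $\tau\in\mathcal{L}$ satisfies $\vartheta\subsetneq\tau\subsetneq\eta$.
   Context: $\mathfrak{c}=|\mathbb{R}|$. $\eta$ denotes the Euclidean topology on $\mathbb{R}$. $\mathcal{L}$ denotes the family of all Hausdorff topologies $\tau$ on $\mathbb{R}$ with $\tau\subset\eta$. For $\tau\in\mathcal{L}$ and $a\in\mathbb{R}$ let $\mathcal{N}_\tau(a)$ be the neighborhood filter of $a$; let $C(\tau)$ be the set of all $a$ with $\mathcal{N}_\tau(a)\neq\mathcal{N}_\eta(a)$. $\mathcal{L}_0:=\{\tau\in\mathcal{L}\mid C(\tau)\subset\{0\}\}$. *)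

theory Defs
  imports "HOL-Analysis.Analysis" "HOL-Library.Equipollence"
begin

text \<open>Topologies on the real line are values of type real topology with topspace UNIV.
  The Euclidean topology eta is euclideanreal. Coarser-than is inclusion of the families of open sets.\<close>

definition coarser :: "real topology \<Rightarrow> real topology \<Rightarrow> bool" where
  "coarser \<tau> \<sigma> \<longleftrightarrow> (\<forall>U. openin \<tau> U \<longrightarrow> openin \<sigma> U)"

definition LL :: "real topology set" where
  "LL = {\<tau>. topspace \<tau> = UNIV \<and> Hausdorff_space \<tau> \<and> coarser \<tau> euclideanreal}"

definition Cset :: "real topology \<Rightarrow> real set" where
  "Cset \<tau> = {a. nhdsin \<tau> a \<noteq> nhdsin euclideanreal a}"

definition LL0 :: "real topology set" where
  "LL0 = {\<tau> \<in> LL. Cset \<tau> \<subseteq> {0}}"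

end

theory Submission
  imports Defs "HOL-Library.Nat_Bijection"
begin

text \<open>Let M be a maximal family of nonempty open sets closed under finite intersections and
  containing the tails (n, \<infinity>). Keeping Euclidean neighbourhoods at every x \<noteq> 0 and declaring the
  sets ball 0 e \<union> W (W \<in> M) to be the basic neighbourhoods of 0 gives a topology \<theta>_M in L_0.
  Maximality makes \<theta>_M a coatom below \<eta>: a strictly finer \<tau> \<subseteq> \<eta> contains an open U \<ni> 0 with
  U \<notin> M, hence disjoint from some W \<in> M, and (ball 0 d \<union> W) \<inter> U lies in ball 0 d.

  Spreading Hausdorff's independent family of continuum many subsets of \<nat> over the intervals
  (m, m + 1) gives, for each S \<subseteq> P(\<nat>), a maximal M_S, where M_S and M_S' contain disjoint sets
  when S \<noteq> S'; so there are 2^c distinct \<theta>_M. A homeomorphism between members of L_0 is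
  Euclidean-continuous off the preimage of 0, hence determined by that preimage and its values
  on \<rat>. So each homeomorphism class has at most c members, and 2^c classes remain.\<close>

section \<open>Maximal open filters\<close>

definition open_filter :: "'a::topological_space set set \<Rightarrow> bool" where
  "open_filter M \<longleftrightarrow> (\<forall>W\<in>M. open W \<and> W \<noteq> {}) \<and> (\<forall>W\<in>M. \<forall>V\<in>M. W \<inter> V \<in> M)"

definition open_ultrafilter :: "'a::topological_space set set \<Rightarrow> bool" where
  "open_ultrafilter M \<longleftrightarrow> open_filter M \<and> (\<forall>M'. open_filter M' \<and> M \<subseteq> M' \<longrightarrow> M' = M)"

lemma open_filterD:
  assumes "open_filter M"
  shows "\<And>W. W \<in> M \<Longrightarrow> open W" "\<And>W. W \<in> M \<Longrightarrow> W \<noteq> {}"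
    "\<And>W V. W \<in> M \<Longrightarrow> V \<in> M \<Longrightarrow> W \<inter> V \<in> M"
  using assms unfolding open_filter_def by auto

lemma open_filter_generated:
  assumes "\<And>W. W \<in> B \<Longrightarrow> open W" "\<And>K. finite K \<Longrightarrow> K \<subseteq> B \<Longrightarrow> \<Inter>K \<noteq> {}"
  shows "open_filter {U. open U \<and> (\<exists>K\<subseteq>B. finite K \<and> \<Inter>K \<subseteq> U)}"
  unfolding open_filter_def
proof (rule conjI; intro ballI)
  fix W V assume "W \<in> {U. open U \<and> (\<exists>K\<subseteq>B. finite K \<and> \<Inter>K \<subseteq> U)}"
    "V \<in> {U. open U \<and> (\<exists>K\<subseteq>B. finite K \<and> \<Inter>K \<subseteq> U)}"
  then obtain K L where "open W" "open V" "K \<subseteq> B" "L \<subseteq> B" "finite K" "finite L"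
    "\<Inter>K \<subseteq> W" "\<Inter>L \<subseteq> V" by auto
  then show "W \<inter> V \<in> {U. open U \<and> (\<exists>K\<subseteq>B. finite K \<and> \<Inter>K \<subseteq> U)}"
    by (intro CollectI conjI open_Int exI[of _ "K \<union> L"]) auto
qed (use assms in blast)+

lemma open_filter_chain_Union:
  assumes "subset.chain {M. open_filter M} C"
  shows "open_filter (\<Union>C)"
  unfolding open_filter_def
proof (rule conjI; intro ballI)
  fix W assume "W \<in> \<Union>C"
  with assms show "open W \<and> W \<noteq> {}"
    unfolding subset_chain_def open_filter_def by blast
next
  fix W V assume "W \<in> \<Union>C" "V \<in> \<Union>C"
  then obtain M N where MN: "M \<in> C" "N \<in> C" "W \<in> M" "V \<in> N" by blast
  with assms have "M \<subseteq> N \<or> N \<subseteq> M" "open_filter M" "open_filter N"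
    unfolding subset_chain_def by auto
  with MN show "W \<inter> V \<in> \<Union>C" unfolding open_filter_def by blast
qed

lemma open_filter_extends_to_ultrafilter:
  assumes "open_filter M0"
  shows "\<exists>M. open_ultrafilter M \<and> M0 \<subseteq> M"
proof -
  let ?A = "{M. open_filter M \<and> M0 \<subseteq> M}"
  have "\<exists>M\<in>?A. \<forall>X\<in>?A. M \<subseteq> X \<longrightarrow> X = M"
  proof (rule subset_Zorn_nonempty)
    show "?A \<noteq> {}" using assms by blast
  next
    fix C assume C: "C \<noteq> {}" "subset.chain ?A C"
    then have "subset.chain {M. open_filter M} C" "C \<subseteq> ?A"
      by (auto simp: subset_chain_def)
    then have "open_filter (\<Union>C)" "M0 \<subseteq> \<Union>C"
      using open_filter_chain_Union \<open>C \<noteq> {}\<close> by auto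
    then show "\<Union>C \<in> ?A" by simp
  qed
  then obtain M where "open_filter M" "M0 \<subseteq> M" "\<And>X. open_filter X \<Longrightarrow> M \<subseteq> X \<Longrightarrow> X = M"
    by auto
  then show ?thesis unfolding open_ultrafilter_def by blast
qed

lemma open_ultrafilter_exists:
  assumes "\<And>W. W \<in> B \<Longrightarrow> open W" "\<And>K. finite K \<Longrightarrow> K \<subseteq> B \<Longrightarrow> \<Inter>K \<noteq> {}"
  shows "\<exists>M. open_ultrafilter M \<and> B \<subseteq> M"
proof -
  let ?G = "{U. open U \<and> (\<exists>K\<subseteq>B. finite K \<and> \<Inter>K \<subseteq> U)}"
  have "B \<subseteq> ?G"
  proof
    fix W assume "W \<in> B"
    then show "W \<in> ?G" using assms(1) by (intro CollectI conjI exI[of _ "{W}"]) auto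
  qed
  moreover obtain M where "open_ultrafilter M" "?G \<subseteq> M"
    using open_filter_extends_to_ultrafilter[OF open_filter_generated[OF assms]] by blast
  ultimately show ?thesis by blast
qed

lemma open_ultrafilter_disjoint_member:
  assumes "open_ultrafilter M" "M \<noteq> {}" "open V" "V \<notin> M"
  shows "\<exists>W\<in>M. W \<inter> V = {}"
proof (rule ccontr)
  assume meets: "\<not> (\<exists>W\<in>M. W \<inter> V = {})"
  define M' where "M' = {U. open U \<and> (\<exists>W\<in>M. V \<inter> W \<subseteq> U)}"
  have filter: "open_filter M" and maximal: "\<And>M'. open_filter M' \<Longrightarrow> M \<subseteq> M' \<Longrightarrow> M' = M"
    using assms(1) unfolding open_ultrafilter_def by auto
  have "open_filter M'"
    unfolding open_filter_def
  proof (rule conjI; intro ballI)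
    fix U U' assume "U \<in> M'" "U' \<in> M'"
    then obtain W W' where "W \<in> M" "W' \<in> M" "V \<inter> W \<subseteq> U" "V \<inter> W' \<subseteq> U'" "open U" "open U'"
      by (auto simp: M'_def)
    then show "U \<inter> U' \<in> M'"
      unfolding M'_def using open_filterD(3)[OF filter] by (intro CollectI conjI open_Int bexI[of _ "W \<inter> W'"]) auto
  qed (use meets in \<open>auto simp: M'_def\<close>)
  moreover have "M \<subseteq> M'" using open_filterD(1)[OF filter] unfolding M'_def by auto
  ultimately have "V \<in> M" using maximal assms(2,3) unfolding M'_def by blast
  with assms(4) show False ..
qed

section \<open>The topologies \<theta>_M\<close>

lemma nhdsin_euclideanreal: "nhdsin euclideanreal a = nhds a"
  by (rule filter_eqI) (simp add: eventually_nhdsin eventually_nhds)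

lemma open_filter_unbounded:
  assumes "open_filter M" "\<And>n::nat. {real n<..} \<in> M" "W \<in> M"
  shows "\<exists>z\<in>W. z > real n"
proof -
  have "W \<inter> {real n<..} \<in> M" using open_filterD(3)[OF assms(1)] assms(2,3) by blast
  then show ?thesis using open_filterD(2)[OF assms(1)] by fastforce
qed

text \<open>0 is glued to the end at infinity described by M.\<close>
definition filter_topology :: "real set set \<Rightarrow> real topology" where
  "filter_topology M = topology (\<lambda>U. open U \<and> (0 \<in> U \<longrightarrow> (\<exists>e>0. \<exists>W\<in>M. ball 0 e \<union> W \<subseteq> U)))"

lemma openin_filter_topology:
  assumes "open_filter M"
  shows "openin (filter_topology M) U \<longleftrightarrow> open U \<and> (0 \<in> U \<longrightarrow> (\<exists>e>0. \<exists>W\<in>M. ball 0 e \<union> W \<subseteq> U))"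
proof -
  define P where "P = (\<lambda>U::real set. open U \<and> (0 \<in> U \<longrightarrow> (\<exists>e>0. \<exists>W\<in>M. ball 0 e \<union> W \<subseteq> U)))"
  have "P (S \<inter> T)" if S: "P S" and T: "P T" for S T
    unfolding P_def
  proof (intro conjI impI)
    show "open (S \<inter> T)" using S T unfolding P_def by (intro open_Int) simp_all
    assume "0 \<in> S \<inter> T"
    then obtain e1 W1 e2 W2 where "e1 > 0" "W1 \<in> M" "ball 0 e1 \<union> W1 \<subseteq> S"
      "e2 > 0" "W2 \<in> M" "ball 0 e2 \<union> W2 \<subseteq> T"
      using S T unfolding P_def by (meson IntD1 IntD2)
    moreover have "W1 \<inter> W2 \<in> M" using open_filterD(3)[OF assms] calculation by blast
    ultimately show "\<exists>e>0. \<exists>W\<in>M. ball 0 e \<union> W \<subseteq> S \<inter> T"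
      by (intro exI[of _ "min e1 e2"] conjI bexI[of _ "W1 \<inter> W2"]) auto
  qed
  moreover have "P (\<Union>K)" if K: "\<forall>U\<in>K. P U" for K
    unfolding P_def
  proof (intro conjI impI)
    show "open (\<Union>K)" using K unfolding P_def by (intro open_Union) simp
    assume "0 \<in> \<Union>K"
    then obtain U where "U \<in> K" "0 \<in> U" by blast
    with K obtain e W where "e > 0" "W \<in> M" "ball 0 e \<union> W \<subseteq> U" unfolding P_def by blast
    with \<open>U \<in> K\<close> show "\<exists>e>0. \<exists>W\<in>M. ball 0 e \<union> W \<subseteq> \<Union>K" by blast
  qed
  ultimately have "istopology P" unfolding istopology_def by blast
  then have "openin (filter_topology M) = P"
    unfolding filter_topology_def P_def[symmetric] by (rule topology_inverse')
  then show ?thesis unfolding P_def by simp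
qed

lemma openin_filter_topology_imp_open:
  "open_filter M \<Longrightarrow> openin (filter_topology M) U \<Longrightarrow> open U"
  by (simp add: openin_filter_topology)

lemma openin_filter_topology_avoiding_0:
  "open_filter M \<Longrightarrow> open U \<Longrightarrow> 0 \<notin> U \<Longrightarrow> openin (filter_topology M) U"
  by (simp add: openin_filter_topology)

lemma openin_filter_topology_ball_Un:
  assumes "open_filter M" "W \<in> M" "e > 0"
  shows "openin (filter_topology M) (ball 0 e \<union> W)"
proof -
  have "open (ball 0 e \<union> W)" using open_filterD(1)[OF assms(1,2)] by (intro open_Un) auto
  then show ?thesis unfolding openin_filter_topology[OF assms(1)] using assms(2,3) by blast
qed

lemma topspace_filter_topology:
  assumes "open_filter M" "M \<noteq> {}"
  shows "topspace (filter_topology M) = UNIV"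
proof -
  obtain W where "W \<in> M" using assms(2) by blast
  then have "openin (filter_topology M) UNIV"
    unfolding openin_filter_topology[OF assms(1)] using zero_less_one by blast
  then show ?thesis using openin_subset by blast
qed

lemma nhdsin_filter_topology:
  assumes "open_filter M" "M \<noteq> {}" "a \<noteq> 0"
  shows "nhdsin (filter_topology M) a = nhds a"
proof (rule filter_eqI)
  fix P
  have "eventually P (nhdsin (filter_topology M) a) \<longleftrightarrow>
    (\<exists>S. openin (filter_topology M) S \<and> a \<in> S \<and> (\<forall>x\<in>S. P x))"
    unfolding eventually_nhdsin topspace_filter_topology[OF assms(1,2)] by simp
  also have "\<dots> \<longleftrightarrow> (\<exists>S. open S \<and> a \<in> S \<and> (\<forall>x\<in>S. P x))"
  proof
    assume "\<exists>S. open S \<and> a \<in> S \<and> (\<forall>x\<in>S. P x)"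
    then obtain S where "open S" "a \<in> S" "\<forall>x\<in>S. P x" by blast
    moreover have "openin (filter_topology M) (S - {0})"
      using \<open>open S\<close> by (intro openin_filter_topology_avoiding_0 assms(1)) auto
    ultimately show "\<exists>S. openin (filter_topology M) S \<and> a \<in> S \<and> (\<forall>x\<in>S. P x)"
      using assms(3) by blast
  qed (use openin_filter_topology_imp_open[OF assms(1)] in blast)
  also have "\<dots> \<longleftrightarrow> eventually P (nhds a)" by (simp add: eventually_nhds)
  finally show "eventually P (nhdsin (filter_topology M) a) \<longleftrightarrow> eventually P (nhds a)" .
qed

lemma Hausdorff_filter_topology:
  assumes "open_filter M" "\<And>n::nat. {real n<..} \<in> M"
  shows "Hausdorff_space (filter_topology M)"
proof -
  let ?X = "filter_topology M"
  have separate_0: "\<exists>U V. openin ?X U \<and> openin ?X V \<and> 0 \<in> U \<and> y \<in> V \<and> disjnt U V"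
    if "y \<noteq> 0" for y :: real
  proof -
    obtain n :: nat where n: "2 * \<bar>y\<bar> < real n" using reals_Archimedean2 by blast
    have r: "0 < \<bar>y\<bar> / 2" using that by simp
    let ?U = "ball 0 (\<bar>y\<bar> / 2) \<union> {real n<..}" and ?V = "ball y (\<bar>y\<bar> / 2)"
    have "openin ?X ?U" using r by (intro openin_filter_topology_ball_Un assms) auto
    moreover have "openin ?X ?V"
      using r by (intro openin_filter_topology_avoiding_0 assms(1)) (simp_all add: dist_real_def)
    moreover have "disjnt ?U ?V"
      unfolding disjnt_def
    proof (rule equals0I)
      fix z assume "z \<in> ?U \<inter> ?V"
      then have "\<bar>y - z\<bar> < \<bar>y\<bar> / 2" "\<bar>z\<bar> < \<bar>y\<bar> / 2 \<or> z > real n"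
        by (auto simp: dist_real_def)
      then show False using n by linarith
    qed
    moreover have "0 \<in> ?U" "y \<in> ?V" using r by auto
    ultimately show ?thesis by blast
  qed
  show ?thesis unfolding Hausdorff_space_def
  proof (intro allI impI)
    fix x y assume "x \<in> topspace ?X \<and> y \<in> topspace ?X \<and> x \<noteq> y"
    then have "x \<noteq> y" by blast
    consider "x = 0" | "y = 0" | "x \<noteq> 0" "y \<noteq> 0" by blast
    then show "\<exists>U V. openin ?X U \<and> openin ?X V \<and> x \<in> U \<and> y \<in> V \<and> disjnt U V"
    proof cases
      case 1
      with separate_0[of y] \<open>x \<noteq> y\<close> show ?thesis by blast
    next
      case 2
      then obtain U V where "openin ?X U" "openin ?X V" "0 \<in> U" "x \<in> V" "disjnt U V"
        using separate_0[of x] \<open>x \<noteq> y\<close> by blast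
      with 2 show ?thesis using disjnt_sym by blast
    next
      case 3
      obtain U V where "open U" "open V" "x \<in> U" "y \<in> V" "U \<inter> V = {}"
        using hausdorff[OF \<open>x \<noteq> y\<close>] by blast
      moreover have "openin ?X (U - {0})" "openin ?X (V - {0})"
        using \<open>open U\<close> \<open>open V\<close> by (auto intro!: openin_filter_topology_avoiding_0 assms(1))
      ultimately show ?thesis using 3 by (intro exI[of _ "U - {0}"] exI[of _ "V - {0}"]) (auto simp: disjnt_def)
    qed
  qed
qed

lemma filter_topology_in_LL0:
  assumes "open_filter M" "\<And>n::nat. {real n<..} \<in> M"
  shows "filter_topology M \<in> LL0"
proof -
  have "M \<noteq> {}" using assms(2) by blast
  have "filter_topology M \<in> LL"
    unfolding LL_def coarser_def
    using topspace_filter_topology[OF assms(1) \<open>M \<noteq> {}\<close>] Hausdorff_filter_topology[OF assms]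
      openin_filter_topology_imp_open[OF assms(1)] by simp
  moreover have "Cset (filter_topology M) \<subseteq> {0}"
    unfolding Cset_def using nhdsin_filter_topology[OF assms(1) \<open>M \<noteq> {}\<close>] nhdsin_euclideanreal by auto
  ultimately show ?thesis unfolding LL0_def by blast
qed

lemma filter_topology_neq_euclidean:
  assumes "open_filter M" "\<And>n::nat. {real n<..} \<in> M"
  shows "filter_topology M \<noteq> euclideanreal"
proof
  assume "filter_topology M = euclideanreal"
  then have "openin (filter_topology M) (ball 0 1)" by simp
  then obtain e W where "W \<in> M" "ball 0 e \<union> W \<subseteq> ball 0 1"
    by (auto simp: openin_filter_topology[OF assms(1)])
  moreover obtain z where "z \<in> W" "z > real 1" using open_filter_unbounded[OF assms] \<open>W \<in> M\<close> by blast
  ultimately show False by (auto simp: dist_real_def)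
qed

lemma filter_topology_neq:
  assumes "open_filter M1" "open_filter M2" "\<And>n::nat. {real n<..} \<in> M2"
    and "V \<in> M1" "W \<in> M2" "V \<inter> W = {}"
  shows "filter_topology M1 \<noteq> filter_topology M2"
proof
  assume eq: "filter_topology M1 = filter_topology M2"
  have "openin (filter_topology M1) (ball 0 1 \<union> V)"
    using assms(1,4) by (rule openin_filter_topology_ball_Un) simp
  then obtain e W' where "W' \<in> M2" "ball 0 e \<union> W' \<subseteq> ball 0 1 \<union> V"
    unfolding eq by (auto simp: openin_filter_topology[OF assms(2)])
  moreover have "W' \<inter> W \<in> M2" using open_filterD(3)[OF assms(2)] \<open>W' \<in> M2\<close> assms(5) by blast
  then obtain z where "z \<in> W' \<inter> W" "z > real 1" using open_filter_unbounded[OF assms(2,3)] by blast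
  ultimately show False using assms(6) by (auto simp: dist_real_def)
qed

lemma filter_topology_coatom:
  assumes "open_ultrafilter M" "\<And>n::nat. {real n<..} \<in> M"
    and "coarser (filter_topology M) \<tau>" "filter_topology M \<noteq> \<tau>" "coarser \<tau> euclideanreal"
  shows "\<tau> = euclideanreal"
proof -
  have filter: "open_filter M" using assms(1) unfolding open_ultrafilter_def by blast
  obtain U where U: "openin \<tau> U" "\<not> openin (filter_topology M) U"
    using assms(3,4) unfolding coarser_def topology_eq by blast
  have "open U" using U(1) assms(5) unfolding coarser_def by simp
  have "0 \<in> U" using U(2) \<open>open U\<close> openin_filter_topology_avoiding_0[OF filter] by blast
  then obtain e where "e > 0" "ball 0 e \<subseteq> U" using \<open>open U\<close> open_contains_ball by blast
  then have "U \<notin> M" using U(2) \<open>open U\<close> by (auto simp: openin_filter_topology[OF filter])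
  then obtain W where W: "W \<in> M" "W \<inter> U = {}"
    using open_ultrafilter_disjoint_member[OF assms(1) _ \<open>open U\<close>] assms(2) by blast
  have "openin \<tau> S" if "open S" for S
  proof (cases "0 \<in> S")
    case False
    then show ?thesis using assms(3) openin_filter_topology_avoiding_0[OF filter that]
      unfolding coarser_def by blast
  next
    case True
    then obtain d where "d > 0" "ball 0 d \<subseteq> S" using \<open>open S\<close> open_contains_ball by blast
    have "openin (filter_topology M) (ball 0 d \<union> W)" "openin (filter_topology M) (S - {0})"
      using \<open>open S\<close> \<open>d > 0\<close> W(1)
      by (auto intro: openin_filter_topology_ball_Un openin_filter_topology_avoiding_0 filter)
    then have "openin \<tau> (ball 0 d \<union> W)" "openin \<tau> (S - {0})"
      using assms(3) unfolding coarser_def by blast+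
    then have "openin \<tau> ((ball 0 d \<union> W) \<inter> U \<union> (S - {0}))" using U(1) by blast
    moreover have "(ball 0 d \<union> W) \<inter> U \<union> (S - {0}) = S"
      using W(2) \<open>ball 0 d \<subseteq> S\<close> \<open>0 \<in> U\<close> \<open>d > 0\<close> True by auto
    ultimately show ?thesis by simp
  qed
  with assms(5) show ?thesis unfolding coarser_def topology_eq by auto
qed

section \<open>Continuum many separated maximal open filters\<close>

lemma eventually_prefixes_inj_on:
  assumes "finite K"
  shows "eventually (\<lambda>k. inj_on (\<lambda>X::nat set. X \<inter> {..<k}) K) sequentially"
proof -
  have "eventually (\<lambda>k. X \<inter> {..<k} = Y \<inter> {..<k} \<longrightarrow> X = Y) sequentially" for X Y :: "nat set"
  proof (cases "X = Y")
    case False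
    then obtain i where "i \<in> X \<longleftrightarrow> i \<notin> Y" by blast
    then have prefixes_differ: "X \<inter> {..<k} \<noteq> Y \<inter> {..<k}" if "i < k" for k using that by blast
    have "eventually (\<lambda>k. i < k) sequentially" by (rule eventually_gt_at_top)
    then show ?thesis by eventually_elim (use prefixes_differ in blast)
  qed simp
  then have "eventually (\<lambda>k. \<forall>X\<in>K. \<forall>Y\<in>K. X \<inter> {..<k} = Y \<inter> {..<k} \<longrightarrow> X = Y) sequentially"
    using assms by (simp add: eventually_ball_finite)
  then show ?thesis unfolding inj_on_def by simp
qed

text \<open>Hausdorff's independent family: given finitely many distinct X, a prefix length k
  separating them and a code j listing the prefixes of those that should contain m make
  m = prod_encode (k, j) realize any prescribed membership pattern.\<close>
definition independent_set :: "nat set \<Rightarrow> nat set" where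
  "independent_set X = {prod_encode (k, j) | k j. set_encode (X \<inter> {..<k}) \<in> set_decode j}"

lemma independent_set_independent:
  assumes "finite K"
  shows "\<exists>m\<ge>n. \<forall>X\<in>K. m \<in> independent_set X \<longleftrightarrow> X \<in> S"
proof -
  obtain k where "k \<ge> n" and prefixes_inj: "inj_on (\<lambda>X. X \<inter> {..<k}) K"
    using eventually_happens'[OF _ eventually_conj[OF eventually_ge_at_top[of n]
        eventually_prefixes_inj_on[OF assms]]] by auto
  define code where "code X = set_encode (X \<inter> {..<k})" for X
  have "inj_on code K"
    using prefixes_inj unfolding code_def inj_on_def by (simp add: set_encode_eq)
  define m where "m = prod_encode (k, set_encode (code ` (K \<inter> S)))"
  have "n \<le> m" unfolding m_def using \<open>k \<ge> n\<close> le_prod_encode_1 order_trans by blast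
  moreover have "m \<in> independent_set X \<longleftrightarrow> X \<in> S" if "X \<in> K" for X
  proof -
    have "m \<in> independent_set X \<longleftrightarrow> code X \<in> code ` (K \<inter> S)"
      unfolding independent_set_def m_def code_def using assms by auto
    also have "\<dots> \<longleftrightarrow> X \<in> S" using inj_on_image_mem_iff[OF \<open>inj_on code K\<close> that] that by blast
    finally show ?thesis .
  qed
  ultimately show ?thesis by blast
qed

definition independent_open :: "nat set set \<Rightarrow> nat set \<Rightarrow> real set" where
  "independent_open S X = (\<Union>m\<in>{m. m \<in> independent_set X \<longleftrightarrow> X \<in> S}. {real m<..<real m + 1})"

lemma open_independent_open: "open (independent_open S X)"
  unfolding independent_open_def by auto

lemma unit_intervals_disjoint:
  assumes "x \<in> {real m<..<real m + 1}" "x \<in> {real m'<..<real m' + 1}"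
  shows "m = m'"
proof -
  have "real m < real (m' + 1)" "real m' < real (m + 1)" using assms by auto
  then have "m < m' + 1" "m' < m + 1" by (simp_all only: of_nat_less_iff)
  then show ?thesis by simp
qed

lemma independent_open_disjoint:
  assumes "X \<in> S1 \<longleftrightarrow> X \<notin> S2"
  shows "independent_open S1 X \<inter> independent_open S2 X = {}"
  using assms unit_intervals_disjoint unfolding independent_open_def by blast

lemma independent_open_tail_nonempty:
  assumes "finite K"
  shows "{real n<..} \<inter> \<Inter>(independent_open S ` K) \<noteq> {}"
proof -
  obtain m where "m \<ge> n" and m: "\<And>X. X \<in> K \<Longrightarrow> m \<in> independent_set X \<longleftrightarrow> X \<in> S"
    using independent_set_independent[OF assms, of n S] by blast
  have "real m + 1/2 \<in> independent_open S X" if "X \<in> K" for X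
    unfolding independent_open_def
  proof (rule UN_I)
    show "m \<in> {m. m \<in> independent_set X \<longleftrightarrow> X \<in> S}" using m[OF that] by simp
  qed simp
  moreover have "real m + 1/2 > real n" using \<open>m \<ge> n\<close> by simp
  ultimately have "real m + 1/2 \<in> {real n<..} \<inter> \<Inter>(independent_open S ` K)" by blast
  then show ?thesis by blast
qed

lemma independent_ultrafilter_exists:
  "\<exists>M. open_ultrafilter M \<and> range (\<lambda>n::nat. {real n<..}) \<union> range (independent_open S) \<subseteq> M"
proof (rule open_ultrafilter_exists)
  let ?tail = "\<lambda>n::nat. {real n<..}"
  show "open W" if "W \<in> range ?tail \<union> range (independent_open S)" for W
    using that open_independent_open by auto
  fix K assume K: "finite K" "K \<subseteq> range ?tail \<union> range (independent_open S)"
  have "finite (K \<inter> range ?tail)" "finite (K \<inter> range (independent_open S))" using K(1) by simp_all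
  obtain N where N: "finite N" "K \<inter> range ?tail = ?tail ` N"
    using finite_subset_image[OF \<open>finite (K \<inter> range ?tail)\<close> Int_lower2] by blast
  obtain Xs where Xs: "finite Xs" "K \<inter> range (independent_open S) = independent_open S ` Xs"
    using finite_subset_image[OF \<open>finite (K \<inter> range (independent_open S))\<close> Int_lower2] by blast
  obtain b where b: "\<forall>n\<in>N. n \<le> b" using N(1) finite_nat_set_iff_bounded_le by blast
  have "{real b<..} \<inter> \<Inter>(independent_open S ` Xs) \<subseteq> \<Inter>K"
  proof
    fix x assume x: "x \<in> {real b<..} \<inter> \<Inter>(independent_open S ` Xs)"
    show "x \<in> \<Inter>K"
    proof
      fix W assume "W \<in> K"
      then have "W \<in> K \<inter> range ?tail \<or> W \<in> K \<inter> range (independent_open S)" using K(2) by blast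
      then have "W \<in> ?tail ` N \<or> W \<in> independent_open S ` Xs" unfolding N(2) Xs(2) .
      then consider n where "n \<in> N" "W = {real n<..}" | X where "X \<in> Xs" "W = independent_open S X"
        by blast
      then show "x \<in> W"
      proof cases
        case 1
        then have "real n \<le> real b" using b by simp
        with x 1 show ?thesis by simp
      qed (use x in blast)
    qed
  qed
  then show "\<Inter>K \<noteq> {}" using independent_open_tail_nonempty[OF Xs(1)] by blast
qed

lemma UNIV_nat_sets_sets_eqpoll: "(UNIV :: nat set set set) \<approx> (UNIV :: real set set)"
proof -
  obtain f where "bij_betw f (UNIV :: nat set set) (UNIV :: real set)"
    using nat_sets_eqpoll_reals unfolding eqpoll_def by blast
  then have "bij_betw (image f) (Pow (UNIV :: nat set set)) (Pow UNIV)" by (rule bij_betw_image_Pow)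
  then show ?thesis unfolding eqpoll_def by auto
qed

lemma filter_topology_family:
  obtains T :: "real topology set"
  where "T \<approx> (UNIV :: real set set)" "T \<subseteq> LL0 - {euclideanreal}"
    "\<And>\<theta> \<tau>. \<theta> \<in> T \<Longrightarrow> coarser \<theta> \<tau> \<Longrightarrow> \<theta> \<noteq> \<tau> \<Longrightarrow> coarser \<tau> euclideanreal \<Longrightarrow> \<tau> = euclideanreal"
proof -
  obtain U where "\<forall>S. open_ultrafilter (U S) \<and>
      range (\<lambda>n::nat. {real n<..}) \<union> range (independent_open S) \<subseteq> U S"
    using choice[OF allI[OF independent_ultrafilter_exists]] ..
  then have U: "\<And>S. open_ultrafilter (U S)" "\<And>S n. {real n<..} \<in> U S"
    "\<And>S X. independent_open S X \<in> U S" by blast+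
  then have filter: "\<And>S. open_filter (U S)" unfolding open_ultrafilter_def by blast
  have "inj (\<lambda>S. filter_topology (U S))"
  proof (rule injI, rule ccontr)
    fix S1 S2 assume eq: "filter_topology (U S1) = filter_topology (U S2)" and "S1 \<noteq> S2"
    then obtain X where "X \<in> S1 \<longleftrightarrow> X \<notin> S2" by blast
    then have "independent_open S1 X \<inter> independent_open S2 X = {}" by (rule independent_open_disjoint)
    then have "filter_topology (U S1) \<noteq> filter_topology (U S2)"
      by (rule filter_topology_neq[OF filter filter U(2) U(3) U(3)])
    with eq show False by blast
  qed
  define T where "T = range (\<lambda>S. filter_topology (U S))"
  have "T \<approx> (UNIV :: nat set set set)"
    unfolding T_def using \<open>inj (\<lambda>S. filter_topology (U S))\<close> by (rule inj_on_image_eqpoll_self)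
  also have "\<dots> \<approx> (UNIV :: real set set)" by (rule UNIV_nat_sets_sets_eqpoll)
  finally have "T \<approx> (UNIV :: real set set)" .
  moreover have "T \<subseteq> LL0 - {euclideanreal}"
    unfolding T_def using filter_topology_in_LL0[OF filter U(2)] filter_topology_neq_euclidean[OF filter U(2)]
    by auto
  moreover have "\<tau> = euclideanreal"
    if "\<theta> \<in> T" "coarser \<theta> \<tau>" "\<theta> \<noteq> \<tau>" "coarser \<tau> euclideanreal" for \<theta> \<tau>
    using that filter_topology_coatom[OF U(1,2)] unfolding T_def by blast
  ultimately show thesis by (rule that)
qed

section \<open>Homeomorphism classes in L_0\<close>

lemma LL_topspace: "\<theta> \<in> LL \<Longrightarrow> topspace \<theta> = UNIV"
  unfolding LL_def by simp

lemma LL_openin_imp_open: "\<theta> \<in> LL \<Longrightarrow> openin \<theta> U \<Longrightarrow> open U"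
  unfolding LL_def coarser_def by simp

lemma LL0_nhdsin: "\<theta> \<in> LL0 \<Longrightarrow> a \<noteq> 0 \<Longrightarrow> nhdsin \<theta> a = nhds a"
  unfolding LL0_def Cset_def by (auto simp: nhdsin_euclideanreal)

lemma LL0_subset_LL: "LL0 \<subseteq> LL"
  unfolding LL0_def by blast

lemma homeomorphic_map_LL_bij:
  assumes "\<rho> \<in> LL" "\<theta> \<in> LL" "homeomorphic_map \<rho> \<theta> h"
  shows "bij h"
  using homeomorphic_imp_injective_map[OF assms(3)] homeomorphic_imp_surjective_map[OF assms(3)]
  unfolding LL_topspace[OF assms(1)] LL_topspace[OF assms(2)] by (simp add: bij_def)

lemma homeomorphic_map_LL_openin_iff:
  assumes "\<rho> \<in> LL" "\<theta> \<in> LL" "homeomorphic_map \<rho> \<theta> h"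
  shows "openin \<theta> V \<longleftrightarrow> openin \<rho> (h -` V)"
proof -
  have "h ` (h -` V) = V" using homeomorphic_map_LL_bij[OF assms] by (simp add: bij_is_surj surj_image_vimage_eq)
  moreover have "openin \<theta> (h ` (h -` V)) \<longleftrightarrow> openin \<rho> (h -` V)"
    using assms(3) by (rule homeomorphic_map_openness) (simp add: LL_topspace[OF assms(1)])
  ultimately show ?thesis by simp
qed

lemma continuous_map_LL0_isCont:
  assumes "\<rho> \<in> LL" "\<theta> \<in> LL0" "continuous_map \<rho> \<theta> h" "h x \<noteq> 0"
  shows "isCont h x"
  unfolding continuous_at_open
proof (intro allI impI)
  fix T assume "open T \<and> h x \<in> T"
  then have "eventually (\<lambda>y. y \<in> T) (nhdsin \<theta> (h x))"
    unfolding LL0_nhdsin[OF assms(2,4)] eventually_nhds by blast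
  then obtain T' where "openin \<theta> T'" "h x \<in> T'" "T' \<subseteq> T"
    unfolding eventually_nhdsin LL_topspace[OF subsetD[OF LL0_subset_LL assms(2)]] by blast
  have "openin \<rho> {y \<in> topspace \<rho>. h y \<in> T'}"
    using assms(3) \<open>openin \<theta> T'\<close> by (rule openin_continuous_map_preimage)
  then have "open (h -` T')"
    using LL_openin_imp_open[OF assms(1)] by (simp add: LL_topspace[OF assms(1)] vimage_def)
  then show "\<exists>S. open S \<and> x \<in> S \<and> (\<forall>y\<in>S. h y \<in> T)"
    using \<open>h x \<in> T'\<close> \<open>T' \<subseteq> T\<close> by (intro exI[of _ "h -` T'"]) auto
qed

lemma isCont_eq_on_closure:
  fixes f g :: "'a::t2_space \<Rightarrow> 'b::t2_space"
  assumes "isCont f x" "isCont g x" "x \<in> closure D" "\<And>y. y \<in> D \<Longrightarrow> f y = g y"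
  shows "f x = g x"
proof (cases "x \<in> D")
  case False
  then have "at x within D \<noteq> bot"
    using assms(3) by (simp add: closure_def trivial_limit_within)
  moreover have "(f \<longlongrightarrow> f x) (at x within D)" "(g \<longlongrightarrow> g x) (at x within D)"
    using assms(1,2) continuous_at_imp_continuous_at_within continuous_within by blast+
  moreover have "eventually (\<lambda>y. f y = g y) (at x within D)"
    using assms(4) by (simp add: eventually_at_filter)
  ultimately show ?thesis using tendsto_cong tendsto_unique by metis
qed (use assms(4) in blast)

lemma homeomorphic_maps_LL0_eq:
  assumes "\<rho> \<in> LL" "\<theta>1 \<in> LL0" "\<theta>2 \<in> LL0"
    and h1: "homeomorphic_map \<rho> \<theta>1 h1" and h2: "homeomorphic_map \<rho> \<theta>2 h2"
    and rats: "\<And>q. q \<in> \<rat> \<Longrightarrow> h1 q = h2 q" and zero: "inv h1 0 = inv h2 0"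
  shows "h1 = h2"
proof
  fix x
  have "bij h1" "bij h2"
    using homeomorphic_map_LL_bij[OF assms(1) _ h1] homeomorphic_map_LL_bij[OF assms(1) _ h2]
      assms(2,3) LL0_subset_LL by blast+
  show "h1 x = h2 x"
  proof (cases "x = inv h1 0")
    case True
    have "h1 (inv h1 0) = 0" "h2 (inv h2 0) = 0"
      using \<open>bij h1\<close> \<open>bij h2\<close> by (simp_all add: bij_is_surj surj_f_inv_f)
    with True zero show ?thesis by simp
  next
    case False
    then have "h1 x \<noteq> 0" "h2 x \<noteq> 0"
      using zero \<open>bij h1\<close> \<open>bij h2\<close> by (metis bij_inv_eq_iff)+
    then have "isCont h1 x" "isCont h2 x"
      using continuous_map_LL0_isCont[OF assms(1)] assms(2,3)
        homeomorphic_imp_continuous_map[OF h1] homeomorphic_imp_continuous_map[OF h2] by blast+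
    then show ?thesis using isCont_eq_on_closure rats Rats_closure_real by blast
  qed
qed

lemma countable_to_real_funs_lepoll_nat_sets:
  "(UNIV :: ('d::countable \<Rightarrow> real) set) \<lesssim> (UNIV :: nat set set)"
proof -
  obtain e :: "real \<Rightarrow> nat set" where "inj e"
    using eqpoll_sym[OF nat_sets_eqpoll_reals] unfolding eqpoll_def bij_betw_def by blast
  define code where "code \<phi> = {to_nat (d, n) | d n. n \<in> e (\<phi> d)}" for \<phi> :: "'d \<Rightarrow> real"
  have code_iff: "to_nat (d, n) \<in> code \<phi> \<longleftrightarrow> n \<in> e (\<phi> d)" for d n \<phi>
    unfolding code_def by auto
  have "inj code"
  proof (rule injI)
    fix \<phi> \<psi> assume "code \<phi> = code \<psi>"
    then have "e (\<phi> d) = e (\<psi> d)" for d using code_iff by blast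
    then show "\<phi> = \<psi>" using \<open>inj e\<close> by (auto simp: inj_eq)
  qed
  then show ?thesis unfolding lepoll_def by blast
qed

lemma homeomorphism_class_lepoll_nat_sets:
  assumes "\<rho> \<in> LL" "T \<subseteq> LL0"
  shows "{\<theta> \<in> T. \<rho> homeomorphic_space \<theta>} \<lesssim> (UNIV :: nat set set)"
proof -
  define H :: "real topology \<Rightarrow> real \<Rightarrow> real" where
    "H \<theta> = (SOME h. homeomorphic_map \<rho> \<theta> h)" for \<theta>
  have H: "homeomorphic_map \<rho> \<theta> (H \<theta>)" if "\<rho> homeomorphic_space \<theta>" for \<theta>
    using that unfolding homeomorphic_space H_def by (rule someI_ex)
  define code :: "real topology \<Rightarrow> rat option \<Rightarrow> real" where
    "code \<theta> d = (case d of None \<Rightarrow> inv (H \<theta>) 0 | Some q \<Rightarrow> H \<theta> (of_rat q))" for \<theta> d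
  have "inj_on code {\<theta> \<in> T. \<rho> homeomorphic_space \<theta>}"
  proof (rule inj_onI)
    fix \<theta>1 \<theta>2 assume \<theta>1: "\<theta>1 \<in> {\<theta> \<in> T. \<rho> homeomorphic_space \<theta>}"
      and \<theta>2: "\<theta>2 \<in> {\<theta> \<in> T. \<rho> homeomorphic_space \<theta>}" and eq: "code \<theta>1 = code \<theta>2"
    have h1: "homeomorphic_map \<rho> \<theta>1 (H \<theta>1)" and h2: "homeomorphic_map \<rho> \<theta>2 (H \<theta>2)"
      using H \<theta>1 \<theta>2 by blast+
    have on_rats: "H \<theta>1 (of_rat q) = H \<theta>2 (of_rat q)" for q
      using fun_cong[OF eq, of "Some q"] by (simp add: code_def)
    have "H \<theta>1 r = H \<theta>2 r" if "r \<in> \<rat>" for r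
      using that on_rats by (elim Rats_cases) simp
    moreover have "inv (H \<theta>1) 0 = inv (H \<theta>2) 0"
      using fun_cong[OF eq, of None] by (simp add: code_def)
    ultimately have "H \<theta>1 = H \<theta>2"
      using homeomorphic_maps_LL0_eq[OF assms(1) _ _ h1 h2] \<theta>1 \<theta>2 assms(2) by blast
    then show "\<theta>1 = \<theta>2"
      unfolding topology_eq
      using homeomorphic_map_LL_openin_iff[OF assms(1) _ h1] homeomorphic_map_LL_openin_iff[OF assms(1) _ h2]
        \<theta>1 \<theta>2 assms(2) LL0_subset_LL by auto
  qed
  then have "{\<theta> \<in> T. \<rho> homeomorphic_space \<theta>} \<lesssim> (UNIV :: (rat option \<Rightarrow> real) set)"
    unfolding lepoll_def by blast
  also have "\<dots> \<lesssim> (UNIV :: nat set set)" by (rule countable_to_real_funs_lepoll_nat_sets)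
  finally show ?thesis .
qed

section \<open>Cardinal arithmetic\<close>

unbundle cardinal_syntax

lemma lepoll_iff_card_of_ordLeq: "A \<lesssim> B \<longleftrightarrow> |A| \<le>o |B|"
  unfolding lepoll_def by (rule card_of_ordLeq)

lemma lepoll_times_infinite_cancel:
  fixes X :: "'a set" and R :: "'b set" and Y :: "'c set"
  assumes "X \<lesssim> R \<times> Y" and "infinite Y" and "Y \<prec> X"
  shows "X \<lesssim> R"
proof -
  have XRY: "|X| \<le>o |R \<times> Y|" using assms(1) by (simp add: lepoll_iff_card_of_ordLeq)
  have "|R| \<le>o |Y| \<or> |Y| \<le>o |R|" by (rule ordLeq_total[OF card_of_Well_order card_of_Well_order])
  then show ?thesis
  proof
    assume "|R| \<le>o |Y|"
    have "R \<noteq> {}"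
    proof
      assume "R = {}"
      then have "X = {}" using assms(1) by simp
      then show False using lesspoll_imp_lepoll[OF assms(3)] assms(2) by simp
    qed
    then have "|X| \<le>o |Y|"
      using ordLeq_ordIso_trans[OF XRY conjunct2[OF card_of_Times_infinite[OF assms(2)]]]
        \<open>|R| \<le>o |Y|\<close> by blast
    then have "Y \<approx> X"
      by (rule lepoll_antisym[OF lesspoll_imp_lepoll[OF assms(3)], unfolded lepoll_iff_card_of_ordLeq])
    with assms(3) show ?thesis unfolding lesspoll_def by blast
  next
    assume "|Y| \<le>o |R|"
    moreover have "infinite R" using \<open>|Y| \<le>o |R|\<close> assms(2) card_of_ordLeq_finite by blast
    moreover have "Y \<noteq> {}" using assms(2) by auto
    ultimately have "|X| \<le>o |R|"
      using ordLeq_ordIso_trans[OF XRY conjunct1[OF card_of_Times_infinite]] by blast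
    then show ?thesis by (simp add: lepoll_iff_card_of_ordLeq)
  qed
qed

lemma equivp_transversal_eqpoll:
  assumes "equivp R" and classes: "\<And>x. x \<in> T \<Longrightarrow> {y \<in> T. R x y} \<lesssim> Y"
    and "infinite Y" "Y \<prec> T"
  shows "\<exists>F\<subseteq>T. F \<approx> T \<and> (\<forall>x\<in>F. \<forall>y\<in>F. R x y \<longrightarrow> x = y)"
proof -
  define rep where "rep x = (SOME y. y \<in> T \<and> R x y)" for x
  have rep: "rep x \<in> T" "R x (rep x)" if "x \<in> T" for x
    using someI[of "\<lambda>y. y \<in> T \<and> R x y" x] that equivp_reflp[OF assms(1)]
    unfolding rep_def by simp_all
  have rep_eq: "rep x = rep y" if "R x y" for x y
  proof -
    have "R x = R y" using that assms(1) unfolding equivp_def by blast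
    then show ?thesis unfolding rep_def by simp
  qed
  define F where "F = rep ` T"
  have "F \<subseteq> T" using rep(1) unfolding F_def by blast
  have rep_F: "rep x = x" if "x \<in> F" for x
  proof -
    obtain a where "a \<in> T" "x = rep a" using \<open>x \<in> F\<close> unfolding F_def by blast
    then have "rep a = rep x" using rep(2) rep_eq by blast
    with \<open>x = rep a\<close> show ?thesis by simp
  qed
  have inequivalent: "\<forall>x\<in>F. \<forall>y\<in>F. R x y \<longrightarrow> x = y"
  proof (intro ballI impI)
    fix x y assume "x \<in> F" "y \<in> F" "R x y"
    then show "x = y" using rep_eq[OF \<open>R x y\<close>] rep_F by simp
  qed
  have "\<forall>x\<in>T. \<exists>f. inj_on f {y \<in> T. R x y} \<and> f ` {y \<in> T. R x y} \<subseteq> Y"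
    using classes unfolding lepoll_def by blast
  from bchoice[OF this] obtain c
    where c: "\<forall>x\<in>T. inj_on (c x) {y \<in> T. R x y} \<and> c x ` {y \<in> T. R x y} \<subseteq> Y" ..
  have class_rep: "t \<in> {y \<in> T. R (rep t) y}" if "t \<in> T" for t
    using that rep(2) equivp_symp[OF assms(1)] by blast
  have "inj_on (\<lambda>t. (rep t, c (rep t) t)) T"
  proof (rule inj_onI)
    fix t1 t2 assume "t1 \<in> T" "t2 \<in> T" "(rep t1, c (rep t1) t1) = (rep t2, c (rep t2) t2)"
    then have "rep t1 = rep t2" "c (rep t1) t1 = c (rep t1) t2" by auto
    moreover have "t1 \<in> {y \<in> T. R (rep t1) y}" "t2 \<in> {y \<in> T. R (rep t1) y}"
      using class_rep[OF \<open>t1 \<in> T\<close>] class_rep[OF \<open>t2 \<in> T\<close>] \<open>rep t1 = rep t2\<close> by simp_all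
    ultimately show "t1 = t2" using c rep(1)[OF \<open>t1 \<in> T\<close>] by (meson inj_onD)
  qed
  moreover have "(\<lambda>t. (rep t, c (rep t) t)) ` T \<subseteq> F \<times> Y"
    using c rep(1) class_rep unfolding F_def by blast
  ultimately have "T \<lesssim> F \<times> Y" unfolding lepoll_def by blast
  then have "T \<lesssim> F" using assms(3,4) by (rule lepoll_times_infinite_cancel)
  then have "F \<approx> T" using \<open>F \<subseteq> T\<close> by (simp add: lepoll_antisym subset_imp_lepoll)
  with \<open>F \<subseteq> T\<close> inequivalent show ?thesis by blast
qed

lemma equivp_homeomorphic_space: "equivp ((homeomorphic_space) :: 'a topology \<Rightarrow> 'a topology \<Rightarrow> bool)"
  unfolding equivp_reflp_symp_transp reflp_def symp_def transp_def
  using homeomorphic_space_refl homeomorphic_space_sym homeomorphic_space_trans by blast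

lemma nat_sets_lesspoll_real_sets: "(UNIV :: nat set set) \<prec> (UNIV :: real set set)"
proof -
  have "(UNIV :: real set) \<prec> (UNIV :: real set set)" using lesspoll_Pow_self[of "UNIV :: real set"] by simp
  then show ?thesis by (rule eq_lesspoll_trans[OF nat_sets_eqpoll_reals])
qed

theorem proposition8:
  shows "\<exists>F :: real topology set.
    F \<subseteq> LL0 - {euclideanreal} \<and>
    F \<approx> (UNIV :: real set set) \<and>
    (\<forall>\<theta>1\<in>F. \<forall>\<theta>2\<in>F. \<theta>1 \<noteq> \<theta>2 \<longrightarrow> \<not> (\<theta>1 homeomorphic_space \<theta>2)) \<and>
    (\<forall>\<theta>\<in>F. \<not> (\<exists>\<tau>\<in>LL. coarser \<theta> \<tau> \<and> \<theta> \<noteq> \<tau> \<and> coarser \<tau> euclideanreal \<and> \<tau> \<noteq> euclideanreal))"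
proof -
  obtain T where T: "T \<approx> (UNIV :: real set set)" "T \<subseteq> LL0 - {euclideanreal}"
    and coatom: "\<And>\<theta> \<tau>. \<theta> \<in> T \<Longrightarrow> coarser \<theta> \<tau> \<Longrightarrow> \<theta> \<noteq> \<tau> \<Longrightarrow> coarser \<tau> euclideanreal \<Longrightarrow>
      \<tau> = euclideanreal"
    using filter_topology_family by blast
  have classes: "{\<tau> \<in> T. \<theta> homeomorphic_space \<tau>} \<lesssim> (UNIV :: nat set set)" if "\<theta> \<in> T" for \<theta>
    using homeomorphism_class_lepoll_nat_sets[of \<theta> T] that T(2) LL0_subset_LL by blast
  have "infinite (UNIV :: nat set set)" using finite_Pow_iff[of "UNIV :: nat set"] by simp
  moreover have "(UNIV :: nat set set) \<prec> T"
    using nat_sets_lesspoll_real_sets eqpoll_sym[OF T(1)] by (rule lesspoll_eq_trans)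
  ultimately obtain F where F: "F \<subseteq> T" "F \<approx> T" "\<forall>x\<in>F. \<forall>y\<in>F. x homeomorphic_space y \<longrightarrow> x = y"
    using equivp_transversal_eqpoll[OF equivp_homeomorphic_space classes] by blast
  show ?thesis
  proof (intro exI[of _ F] conjI)
    show "F \<approx> (UNIV :: real set set)" using F(2) T(1) by (rule eqpoll_trans)
  qed (use F T coatom in blast)+
qed

end
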